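(* Let $L=E[C_1,\dots,C_n]$ be a congruence normal lattice. If $L$ is shellable, then for every $i\in[n]$ the convex subset $C_i$ intersects the spine of $E[C_1,\dots,C_{i-1}]$.
   Context: All lattices are finite. For a convex subset $C$ of a lattice $L$ (convex: $x,y\in C\Rightarrow[x,y]\subseteq C$), let $I_L(C)=\{y\in L\mid\exists x\in C,\ y\le x\}$, and the doubling $L[C]$ is the subposet of $L\times\{0<1\}$ on $\big(I_L(C)\times\{0\}\big)\sqcup\big(((L\setminus I_L(C))\cup C)\times\{1\}\big)$. $E[\,]$ is the one-element lattice and $E[C_1,\dots,C_{i+1}]:=E[C_1,\dots,C_i][C_{i+1}]$ with $C_{i+1}$ a nonempty convex subset of $E[C_1,\dots,C_i]$. The spine of a poset is the set of elements lying on some chain of maximum length. The order complex $\Delta(L)$ is the simplicial complex on $L$ whose faces are the chains of $L$; its facets are the maximal chains. $L$ is shellable if $\Delta(L)$ is shellable, i.e. its facets admit a linear order $F_1,\dots,F_k$ such that for each $1\le j<k$, the complex $\big(\bigcup_{i\le j}\langle F_i\rangle\big)\cap\langle F_{j+1}\rangle$ is pure of dimension $|F_{j+1}|-2$, where $\langle F\rangle$ is the set of all subsets of $F$. *)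

theory Defs
  imports Main
begin

text \<open>Every lattice E[C_1,...,C_n] is (by construction) a subposet of
the n-fold product of the two-element chain {0<1}. We represent its elements as
boolean lists of length n (the i-th entry is the coordinate added by the i-th
doubling; False = 0, True = 1), ordered componentwise. A finite poset is then
just a finite set of boolean lists with this order.\<close>

definition bleq :: "bool list \<Rightarrow> bool list \<Rightarrow> bool" where
  "bleq x y \<longleftrightarrow> list_all2 (\<lambda>a b. a \<longrightarrow> b) x y"

definition convex_in :: "bool list set \<Rightarrow> bool list set \<Rightarrow> bool" where
  "convex_in L C \<longleftrightarrow> C \<subseteq> L \<and>
     (\<forall>x\<in>C. \<forall>y\<in>C. \<forall>z\<in>L. bleq x z \<and> bleq z y \<longrightarrow> z \<in> C)"

definition downset :: "bool list set \<Rightarrow> bool list set \<Rightarrow> bool list set" where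
  "downset L C = {y \<in> L. \<exists>x\<in>C. bleq y x}"

text \<open>Doubling L[C] as a subposet of L \<times> {0<1}; the pair (x,b) is encoded as x @ [b].\<close>
definition double :: "bool list set \<Rightarrow> bool list set \<Rightarrow> bool list set" where
  "double L C = (\<lambda>x. x @ [False]) ` downset L C
              \<union> (\<lambda>x. x @ [True]) ` ((L - downset L C) \<union> C)"

definition Eseq :: "bool list set list \<Rightarrow> bool list set" where
  "Eseq Cs = foldl double {[]} Cs"

definition valid_doubling_seq :: "bool list set list \<Rightarrow> bool" where
  "valid_doubling_seq Cs \<longleftrightarrow>
     (\<forall>i < length Cs. Cs ! i \<noteq> {} \<and> convex_in (Eseq (take i Cs)) (Cs ! i))"

definition is_chain :: "bool list set \<Rightarrow> bool list set \<Rightarrow> bool" where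
  "is_chain L S \<longleftrightarrow> S \<subseteq> L \<and> (\<forall>x\<in>S. \<forall>y\<in>S. bleq x y \<or> bleq y x)"

definition max_chain_card :: "bool list set \<Rightarrow> nat" where
  "max_chain_card L = Max (card ` {S. is_chain L S})"

definition spine :: "bool list set \<Rightarrow> bool list set" where
  "spine L = {x \<in> L. \<exists>S. is_chain L S \<and> x \<in> S \<and> card S = max_chain_card L}"

definition order_complex :: "bool list set \<Rightarrow> bool list set set" where
  "order_complex L = {S. is_chain L S}"

definition facets :: "'a set set \<Rightarrow> 'a set set" where
  "facets K = {F \<in> K. \<forall>G\<in>K. F \<subseteq> G \<longrightarrow> G = F}"

definition pure_of_dim :: "'a set set \<Rightarrow> int \<Rightarrow> bool" where
  "pure_of_dim K d \<longleftrightarrow> (\<forall>F \<in> facets K. int (card F) = d + 1)"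

text \<open>Shellability: a linear order F_1..F_k of the facets (list index i = F_{i+1}) such that
for each 1 \<le> j < k, (\<Union>_{i\<le>j} <F_i>) \<inter> <F_{j+1}> is pure of dimension |F_{j+1}|-2.\<close>
definition shellable_complex :: "'a set set \<Rightarrow> bool" where
  "shellable_complex K \<longleftrightarrow> (\<exists>Fs. distinct Fs \<and> set Fs = facets K \<and>
     (\<forall>j. 1 \<le> j \<and> j < length Fs \<longrightarrow>
        pure_of_dim ((\<Union>i<j. Pow (Fs ! i)) \<inter> Pow (Fs ! j)) (int (card (Fs ! j)) - 2)))"

definition shellable :: "bool list set \<Rightarrow> bool" where
  "shellable L \<longleftrightarrow> shellable_complex (order_complex L)"

end

theory Submission
  imports Defs
begin

text \<open>
  Projection to the first i coordinates maps the maximal chains of E[C_1,...,C_n] onto the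
  maximal chains of Q = E[C_1,...,C_(i-1)]. In a shelling F_1, F_2, ... each facet F_j with
  j > 1 has at most one vertex outside some earlier facet, so any property of facets that
  survives such a one-vertex exchange propagates from an arbitrary facet down to F_1.
  Two properties of this kind hold for some facet: "the projection is a chain of maximum
  length in Q" (one exchange loses at most one point of the projection, which is again a
  maximal chain), and "the projection meets C_i" (a maximal chain of Q[C_i] through C_i
  contains both copies x @ [False] and x @ [True] of some x in C_i, and an exchange removes
  at most one of them). So the projection of F_1 is a longest chain of Q meeting C_i.
\<close>

section \<open>Chains and facets of finite posets\<close>

lemma bleq_refl: "bleq x x"
  by (simp add: bleq_def list_all2_refl)

lemma bleq_trans: "bleq x y \<Longrightarrow> bleq y z \<Longrightarrow> bleq x z"
  unfolding bleq_def by (rule list_all2_trans) auto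

lemma bleq_antisym: "bleq x y \<Longrightarrow> bleq y x \<Longrightarrow> x = y"
  unfolding bleq_def by (auto simp: list_all2_conv_all_nth intro!: nth_equalityI)

lemma bleq_append_single:
  "length x = length y \<Longrightarrow> bleq (x @ [a]) (y @ [b]) \<longleftrightarrow> bleq x y \<and> (a \<longrightarrow> b)"
  unfolding bleq_def by (simp add: list_all2_append)

lemma
  assumes "finite A" "A \<noteq> {}"
  shows finite_bleq_minimal: "\<exists>m\<in>A. \<forall>x\<in>A. bleq x m \<longrightarrow> x = m"
    and finite_bleq_maximal: "\<exists>m\<in>A. \<forall>x\<in>A. bleq m x \<longrightarrow> x = m"
proof -
  have asym_trans:
      "asymp_on A (\<lambda>x y. bleq x y \<and> x \<noteq> y)" "transp_on A (\<lambda>x y. bleq x y \<and> x \<noteq> y)"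
    by (auto intro!: asymp_onI transp_onI dest: bleq_antisym intro: bleq_trans)
  then show "\<exists>m\<in>A. \<forall>x\<in>A. bleq x m \<longrightarrow> x = m"
    using Finite_Set.bex_min_element[OF assms(1) _ _ assms(2)] by blast
  from asym_trans show "\<exists>m\<in>A. \<forall>x\<in>A. bleq m x \<longrightarrow> x = m"
    using Finite_Set.bex_max_element[OF assms(1) _ _ assms(2)] by blast
qed

lemma ex_facet_superset:
  assumes "finite K" "A \<in> K"
  shows "\<exists>F\<in>facets K. A \<subseteq> F"
proof -
  obtain F where F: "F \<in> K" "A \<subseteq> F"
    and "\<forall>G\<in>{G\<in>K. A \<subseteq> G}. G \<noteq> F \<longrightarrow> \<not> F \<subset> G"
    using Finite_Set.bex_max_element[of "{G\<in>K. A \<subseteq> G}" "(\<subset>)"] assms by auto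
  then have "F \<in> facets K"
    unfolding facets_def by blast
  with F show ?thesis by blast
qed

lemma card_le_adjacent_facet:
  assumes A: "A \<in> facets K" and B: "B \<in> facets K" and "finite B" and adj: "A - {a} \<subseteq> B"
  shows "card A \<le> card B"
proof (cases "A \<subseteq> B")
  case True
  then have "A = B"
    using A B by (simp add: facets_def)
  then show ?thesis
    by simp
next
  case False
  then have a: "a \<in> A" "a \<notin> B"
    using adj by auto
  have "\<not> B \<subseteq> A"
    using A B a unfolding facets_def by blast
  then obtain z where z: "z \<in> B" "z \<notin> A"
    by blast
  have "finite A"
    using finite_subset[OF adj \<open>finite B\<close>] by simp
  then have "card A = card (insert z (A - {a}))"
    using a z by (metis card_Suc_Diff1 card_insert_disjoint finite_Diff Diff_iff)
  also have "\<dots> \<le> card B"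
    using adj z \<open>finite B\<close> by (intro card_mono) auto
  finally show ?thesis .
qed

lemma is_chain_subset: "is_chain L S \<Longrightarrow> S \<subseteq> L"
  by (simp add: is_chain_def)

lemma facets_order_complex_iff:
  "F \<in> facets (order_complex L) \<longleftrightarrow>
     is_chain L F \<and> (\<forall>w\<in>L. (\<forall>f\<in>F. bleq f w \<or> bleq w f) \<longrightarrow> w \<in> F)"
proof
  assume F: "F \<in> facets (order_complex L)"
  then have "is_chain L F"
    by (simp add: facets_def order_complex_def)
  moreover have "w \<in> F" if "w \<in> L" "\<forall>f\<in>F. bleq f w \<or> bleq w f" for w
  proof -
    have "is_chain L (insert w F)"
      using \<open>is_chain L F\<close> that bleq_refl unfolding is_chain_def by blast
    then show ?thesis
      using F unfolding facets_def order_complex_def by blast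
  qed
  ultimately show "is_chain L F \<and> (\<forall>w\<in>L. (\<forall>f\<in>F. bleq f w \<or> bleq w f) \<longrightarrow> w \<in> F)"
    by blast
next
  assume "is_chain L F \<and> (\<forall>w\<in>L. (\<forall>f\<in>F. bleq f w \<or> bleq w f) \<longrightarrow> w \<in> F)"
  then show "F \<in> facets (order_complex L)"
    unfolding facets_def order_complex_def is_chain_def by blast
qed

lemma facet_subset: "F \<in> facets (order_complex L) \<Longrightarrow> F \<subseteq> L"
  by (simp add: facets_order_complex_iff is_chain_def)

lemma finite_chains: "finite L \<Longrightarrow> finite {S. is_chain L S}"
  unfolding is_chain_def by (rule finite_subset[of _ "Pow L"]) auto

lemma chain_extends_to_facet:
  "finite L \<Longrightarrow> is_chain L S \<Longrightarrow> \<exists>F\<in>facets (order_complex L). S \<subseteq> F"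
  by (rule ex_facet_superset) (simp_all add: finite_chains order_complex_def)

lemma card_chain_le_max_chain_card:
  "finite L \<Longrightarrow> is_chain L S \<Longrightarrow> card S \<le> max_chain_card L"
  unfolding max_chain_card_def by (simp add: finite_chains)

lemma ex_facet_card_max_chain_card:
  assumes "finite L"
  shows "\<exists>F\<in>facets (order_complex L). card F = max_chain_card L"
proof -
  have "{} \<in> {S. is_chain L S}"
    by (simp add: is_chain_def)
  then have "max_chain_card L \<in> card ` {S. is_chain L S}"
    unfolding max_chain_card_def using finite_chains[OF assms] by (intro Max_in) auto
  then obtain S where S: "is_chain L S" "card S = max_chain_card L"
    by (metis imageE mem_Collect_eq)
  then obtain F where F: "F \<in> facets (order_complex L)" "S \<subseteq> F"
    using chain_extends_to_facet[OF assms] by blast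
  have "card S \<le> card F"
    using F assms facet_subset by (meson card_mono finite_subset)
  moreover have "card F \<le> max_chain_card L"
    using F assms by (simp add: facets_order_complex_iff card_chain_le_max_chain_card)
  ultimately show ?thesis
    using F S by (intro bexI[OF _ F(1)]) simp
qed

lemma max_chain_subset_spine:
  "is_chain L S \<Longrightarrow> card S = max_chain_card L \<Longrightarrow> S \<subseteq> spine L"
  unfolding spine_def using is_chain_subset by blast

definition shelling :: "'a set set \<Rightarrow> 'a set list \<Rightarrow> bool" where
  "shelling K Fs \<longleftrightarrow> distinct Fs \<and> set Fs = facets K \<and>
     (\<forall>j. 1 \<le> j \<and> j < length Fs \<longrightarrow>
        pure_of_dim ((\<Union>i<j. Pow (Fs ! i)) \<inter> Pow (Fs ! j)) (int (card (Fs ! j)) - 2))"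

lemma shellable_complex_iff_ex_shelling: "shellable_complex K \<longleftrightarrow> (\<exists>Fs. shelling K Fs)"
  by (simp add: shellable_complex_def shelling_def)

lemma shelling_step:
  assumes "shelling K Fs" "0 < j" "j < length Fs" "finite (Fs ! j)"
  shows "\<exists>l<j. \<exists>y. Fs ! j - {y} \<subseteq> Fs ! l"
proof -
  define K' where "K' = (\<Union>i<j. Pow (Fs ! i)) \<inter> Pow (Fs ! j)"
  have "finite K'"
    using assms(4) unfolding K'_def by blast
  moreover have "{} \<in> K'"
    using assms(2) unfolding K'_def by blast
  ultimately obtain H where H: "H \<in> facets K'"
    using ex_facet_superset by blast
  then have "int (card H) = int (card (Fs ! j)) - 1"
    using assms(1-3) unfolding shelling_def pure_of_dim_def K'_def by fastforce
  moreover have HF: "H \<subseteq> Fs ! j"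
    using H unfolding facets_def K'_def by blast
  ultimately have "card (Fs ! j - H) = 1"
    using assms(4) by (simp add: card_Diff_subset finite_subset)
  then obtain y where "Fs ! j - H = {y}"
    by (rule card_1_singletonE)
  moreover obtain l where "l < j" "H \<subseteq> Fs ! l"
    using H unfolding facets_def K'_def by blast
  ultimately show ?thesis
    by blast
qed

lemma shelling_first_facet: "shelling K Fs \<Longrightarrow> facets K \<noteq> {} \<Longrightarrow> Fs ! 0 \<in> facets K"
  unfolding shelling_def by (metis length_greater_0_conv set_empty nth_mem)

lemma shelling_propagates_to_first:
  assumes shelling: "shelling K Fs" and fin: "\<forall>F\<in>facets K. finite F"
    and step: "\<And>F G y. F \<in> facets K \<Longrightarrow> G \<in> facets K \<Longrightarrow> F - {y} \<subseteq> G \<Longrightarrow> P F \<Longrightarrow> P G"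
    and F: "F \<in> facets K" "P F"
  shows "P (Fs ! 0)"
proof -
  have facet_nth: "Fs ! j \<in> facets K" if "j < length Fs" for j
    using shelling that unfolding shelling_def by (metis nth_mem)
  have "j < length Fs \<Longrightarrow> P (Fs ! j) \<Longrightarrow> P (Fs ! 0)" for j
  proof (induction j rule: less_induct)
    case (less j)
    show ?case
    proof (cases "j = 0")
      case False
      then obtain l y where "l < j" "Fs ! j - {y} \<subseteq> Fs ! l"
        using shelling_step[OF shelling _ less.prems(1)] fin facet_nth less.prems(1) by blast
      then show ?thesis
        using less step facet_nth by (meson order.strict_trans)
    qed (use less.prems in simp)
  qed
  then show ?thesis
    using F shelling unfolding shelling_def by (metis in_set_conv_nth)
qed

section \<open>A single doubling\<close>

lemma downset_closed: "y \<in> downset L C \<Longrightarrow> x \<in> L \<Longrightarrow> bleq x y \<Longrightarrow> x \<in> downset L C"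
  unfolding downset_def by (auto intro: bleq_trans)

lemma append_False_mem_double: "x @ [False] \<in> double L C \<longleftrightarrow> x \<in> downset L C"
  unfolding double_def by auto

lemma append_True_mem_double: "x @ [True] \<in> double L C \<longleftrightarrow> x \<in> L - downset L C \<union> C"
  unfolding double_def by auto

locale doubling =
  fixes L C :: "bool list set" and k :: nat
  assumes length_L: "x \<in> L \<Longrightarrow> length x = k"
    and convex: "convex_in L C"
begin

lemma C_subset_L: "C \<subseteq> L"
  using convex by (simp add: convex_in_def)

lemma C_subset_downset: "C \<subseteq> downset L C"
  using C_subset_L bleq_refl by (auto simp: downset_def)

lemma doubleE:
  assumes "z \<in> double L C"
  obtains x a where "z = x @ [a]" "x \<in> L"
  using assms C_subset_L unfolding double_def downset_def by auto

lemma butlast_mem_double: "z \<in> double L C \<Longrightarrow> butlast z \<in> L"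
  by (auto elim: doubleE)

lemma bleq_double_iff:
  "x \<in> L \<Longrightarrow> y \<in> L \<Longrightarrow> bleq (x @ [a]) (y @ [b]) \<longleftrightarrow> bleq x y \<and> (a \<longrightarrow> b)"
  by (simp add: bleq_append_single length_L)

lemma chain_butlast:
  assumes "is_chain (double L C) F"
  shows "is_chain L (butlast ` F)"
  unfolding is_chain_def
proof (intro conjI ballI)
  show "butlast ` F \<subseteq> L"
    using assms butlast_mem_double unfolding is_chain_def by blast
next
  fix u v assume "u \<in> butlast ` F" "v \<in> butlast ` F"
  then obtain f g where fg: "f \<in> F" "g \<in> F" "u = butlast f" "v = butlast g"
    by blast
  then have "f \<in> double L C" "g \<in> double L C"
    using assms by (auto simp: is_chain_def)
  then obtain a b where "f = u @ [a]" "g = v @ [b]" "u \<in> L" "v \<in> L"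
    using fg(3,4) by (metis doubleE butlast_snoc)
  moreover have "bleq f g \<or> bleq g f"
    using assms fg(1,2) by (simp add: is_chain_def)
  ultimately show "bleq u v \<or> bleq v u"
    by (auto simp: bleq_double_iff)
qed

definition lift_bit :: "bool list set \<Rightarrow> bool list \<Rightarrow> bool" where
  "lift_bit F z \<longleftrightarrow> z \<notin> downset L C \<or> (z \<in> C \<and> (\<exists>x. x @ [True] \<in> F \<and> bleq x z))"

lemma lift_bit_mem_double: "z \<in> L \<Longrightarrow> z @ [lift_bit F z] \<in> double L C"
  unfolding lift_bit_def double_def by auto

lemma lift_bit_if_above:
  assumes F: "is_chain (double L C) F" and z: "z \<in> L"
    and x: "x @ [True] \<in> F" "bleq x z"
  shows "lift_bit F z"
proof (cases "z \<in> downset L C")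
  case True
  then obtain c where "c \<in> C" "bleq z c"
    by (auto simp: downset_def)
  moreover have "x \<in> L - downset L C \<union> C"
    using x(1) is_chain_subset[OF F] append_True_mem_double by blast
  then have "x \<in> C"
    using downset_closed[OF True _ x(2)] by blast
  ultimately have "z \<in> C"
    using convex z x(2) unfolding convex_in_def by blast
  then show ?thesis
    using x by (auto simp: lift_bit_def)
qed (simp add: lift_bit_def)

lemma below_if_lift_bit:
  assumes F: "is_chain (double L C) F" and z: "z \<in> L"
    and x: "x @ [False] \<in> F" "bleq z x" and bit: "lift_bit F z"
  shows "bleq x z"
proof -
  have "x \<in> downset L C"
    using x(1) is_chain_subset[OF F] append_False_mem_double by blast
  then obtain x' where x': "x' @ [True] \<in> F" "bleq x' z"
    using bit downset_closed[OF _ z x(2)] by (auto simp: lift_bit_def)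
  then have "x' \<in> L" "x \<in> L"
    using x(1) is_chain_subset[OF F] butlast_mem_double by fastforce+
  moreover have "bleq (x' @ [True]) (x @ [False]) \<or> bleq (x @ [False]) (x' @ [True])"
    using F x'(1) x(1) by (simp add: is_chain_def)
  ultimately have "bleq x x'"
    by (auto simp: bleq_double_iff)
  then show ?thesis
    using x'(2) bleq_trans by blast
qed

lemma lift_bit_comparable:
  assumes F: "is_chain (double L C) F" and z: "z \<in> L"
    and comp: "\<forall>x\<in>butlast ` F. bleq x z \<or> bleq z x" and f: "f \<in> F"
  shows "bleq f (z @ [lift_bit F z]) \<or> bleq (z @ [lift_bit F z]) f"
proof -
  obtain x a where fx: "f = x @ [a]" "x \<in> L"
    using f is_chain_subset[OF F] doubleE by blast
  then have "x \<in> butlast ` F"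
    using f by (metis butlast_snoc image_eqI)
  then consider "bleq x z" | "bleq z x" "\<not> bleq x z"
    using comp by blast
  then show ?thesis
  proof cases
    case 1
    then have "a \<longrightarrow> lift_bit F z"
      using lift_bit_if_above[OF F z] f fx by (cases a) auto
    then show ?thesis
      using 1 fx z by (simp add: bleq_double_iff)
  next
    case 2
    then have "lift_bit F z \<longrightarrow> a"
      using below_if_lift_bit[OF F z] f fx by (cases a) auto
    then show ?thesis
      using 2 fx z by (simp add: bleq_double_iff)
  qed
qed

lemma facet_butlast:
  assumes F: "F \<in> facets (order_complex (double L C))"
  shows "butlast ` F \<in> facets (order_complex L)"
  unfolding facets_order_complex_iff
proof (intro conjI ballI impI)
  have chain: "is_chain (double L C) F"
    using F by (simp add: facets_order_complex_iff)
  then show "is_chain L (butlast ` F)"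
    by (rule chain_butlast)
  fix z assume z: "z \<in> L" "\<forall>x\<in>butlast ` F. bleq x z \<or> bleq z x"
  then have "z @ [lift_bit F z] \<in> F"
    using F lift_bit_mem_double lift_bit_comparable[OF chain z] by (simp add: facets_order_complex_iff)
  then show "z \<in> butlast ` F"
    by (metis butlast_snoc image_eqI)
qed

lemma chain_lift:
  assumes M: "is_chain L M"
  shows "is_chain (double L C) ((\<lambda>x. x @ [x \<notin> downset L C]) ` M)"
  unfolding is_chain_def
proof (intro conjI ballI)
  show "(\<lambda>x. x @ [x \<notin> downset L C]) ` M \<subseteq> double L C"
    using is_chain_subset[OF M] unfolding double_def by auto
next
  have lift_mono: "bleq (x @ [x \<notin> downset L C]) (y @ [y \<notin> downset L C])"
    if "x \<in> M" "y \<in> M" "bleq x y" for x y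
  proof -
    have "x \<in> L" "y \<in> L"
      using that is_chain_subset[OF M] by auto
    then show ?thesis
      using \<open>bleq x y\<close> downset_closed[of y L C x] by (auto simp: bleq_double_iff)
  qed
  fix u v assume "u \<in> (\<lambda>x. x @ [x \<notin> downset L C]) ` M" "v \<in> (\<lambda>x. x @ [x \<notin> downset L C]) ` M"
  then show "bleq u v \<or> bleq v u"
    using M lift_mono unfolding is_chain_def by blast
qed

lemma facets_double_butlast:
  assumes "finite L"
  shows "(\<lambda>F. butlast ` F) ` facets (order_complex (double L C)) = facets (order_complex L)"
proof (intro equalityI subsetI)
  fix M assume M: "M \<in> facets (order_complex L)"
  have "finite (double L C)"
    using assms finite_subset[OF C_subset_L] by (simp add: double_def downset_def)
  then obtain F where F: "F \<in> facets (order_complex (double L C))"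
    and lift_subset: "(\<lambda>x. x @ [x \<notin> downset L C]) ` M \<subseteq> F"
    using chain_extends_to_facet chain_lift M by (meson facets_order_complex_iff)
  have "M \<subseteq> butlast ` F"
    using image_mono[OF lift_subset, of butlast] by (simp add: image_image)
  then have "butlast ` F = M"
    using M facet_butlast[OF F] unfolding facets_def order_complex_def by blast
  with F show "M \<in> (\<lambda>F. butlast ` F) ` facets (order_complex (double L C))"
    by blast
qed (auto intro: facet_butlast)

lemma lower_twin_mem_facet:
  assumes F: "F \<in> facets (order_complex (double L C))"
    and x0: "x0 \<in> C" "x0 @ [True] \<in> F"
    and minimal: "\<And>x. x \<in> C \<Longrightarrow> x @ [True] \<in> F \<Longrightarrow> bleq x x0 \<Longrightarrow> x = x0"
  shows "x0 @ [False] \<in> F"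
proof -
  have chain: "is_chain (double L C) F"
    using F by (simp add: facets_order_complex_iff)
  have x0L: "x0 \<in> L"
    using x0 C_subset_L by blast
  have "x0 @ [False] \<in> double L C"
    using x0 C_subset_downset append_False_mem_double by blast
  moreover have "bleq f (x0 @ [False]) \<or> bleq (x0 @ [False]) f" if f: "f \<in> F" for f
  proof -
    obtain x a where fx: "f = x @ [a]" "x \<in> L"
      using f is_chain_subset[OF chain] doubleE by blast
    have "bleq f (x0 @ [True]) \<or> bleq (x0 @ [True]) f"
      using chain f x0 by (simp add: is_chain_def)
    then show ?thesis
    proof
      assume "bleq f (x0 @ [True])"
      then have below: "bleq x x0"
        using fx x0L by (simp add: bleq_double_iff)
      show ?thesis
      proof (cases a)
        case True
        then have "x @ [True] \<in> double L C"
          using f fx is_chain_subset[OF chain] by auto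
        then have "x \<in> L - downset L C \<union> C"
          by (simp add: append_True_mem_double)
        moreover have "x \<in> downset L C"
          using downset_closed[OF _ fx(2) below] x0 C_subset_downset by blast
        ultimately have "x = x0"
          using minimal f fx True below by auto
        then show ?thesis
          using fx x0L True by (simp add: bleq_double_iff bleq_refl)
      qed (use below fx x0L in \<open>simp add: bleq_double_iff\<close>)
    next
      assume "bleq (x0 @ [True]) f"
      then show ?thesis
        using fx x0L by (simp add: bleq_double_iff)
    qed
  qed
  ultimately show ?thesis
    using F by (simp add: facets_order_complex_iff)
qed

lemma upper_twin_mem_facet:
  assumes F: "F \<in> facets (order_complex (double L C))"
    and x0: "x0 \<in> C" "x0 @ [False] \<in> F"
    and maximal: "\<And>x. x \<in> C \<Longrightarrow> x @ [False] \<in> F \<Longrightarrow> bleq x0 x \<Longrightarrow> x = x0"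
  shows "x0 @ [True] \<in> F"
proof -
  have chain: "is_chain (double L C) F"
    using F by (simp add: facets_order_complex_iff)
  have x0L: "x0 \<in> L"
    using x0 C_subset_L by blast
  have "x0 @ [True] \<in> double L C"
    using x0 append_True_mem_double by blast
  moreover have "bleq f (x0 @ [True]) \<or> bleq (x0 @ [True]) f" if f: "f \<in> F" for f
  proof -
    obtain x a where fx: "f = x @ [a]" "x \<in> L"
      using f is_chain_subset[OF chain] doubleE by blast
    have "bleq f (x0 @ [False]) \<or> bleq (x0 @ [False]) f"
      using chain f x0 by (simp add: is_chain_def)
    then show ?thesis
    proof
      assume "bleq f (x0 @ [False])"
      then show ?thesis
        using fx x0L by (simp add: bleq_double_iff)
    next
      assume "bleq (x0 @ [False]) f"
      then have above: "bleq x0 x"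
        using fx x0L by (simp add: bleq_double_iff)
      show ?thesis
      proof (cases a)
        case False
        then have "x @ [False] \<in> double L C"
          using f fx is_chain_subset[OF chain] by auto
        then have "x \<in> downset L C"
          by (simp add: append_False_mem_double)
        then obtain c where "c \<in> C" "bleq x c"
          by (auto simp: downset_def)
        then have "x \<in> C"
          using convex x0(1) above fx(2) unfolding convex_in_def by blast
        then have "x = x0"
          using maximal f fx False above by auto
        then show ?thesis
          using fx x0L False by (simp add: bleq_double_iff bleq_refl)
      qed (use above fx x0L in \<open>simp add: bleq_double_iff\<close>)
    qed
  qed
  ultimately show ?thesis
    using F by (simp add: facets_order_complex_iff)
qed

lemma facet_double_twin:
  assumes fin: "finite L" and F: "F \<in> facets (order_complex (double L C))"
    and c: "c \<in> C" "c @ [b] \<in> F"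
  shows "\<exists>x\<in>C. x @ [False] \<in> F \<and> x @ [True] \<in> F"
proof (cases b)
  case True
  have "finite {x\<in>C. x @ [True] \<in> F}" "{x\<in>C. x @ [True] \<in> F} \<noteq> {}"
    using finite_subset[OF C_subset_L fin] c True by auto
  then obtain x0 where "x0 \<in> {x\<in>C. x @ [True] \<in> F}"
    "\<forall>x\<in>{x\<in>C. x @ [True] \<in> F}. bleq x x0 \<longrightarrow> x = x0"
    by (blast dest: finite_bleq_minimal)
  then show ?thesis
    using lower_twin_mem_facet[OF F, of x0] by auto
next
  case False
  have "finite {x\<in>C. x @ [False] \<in> F}" "{x\<in>C. x @ [False] \<in> F} \<noteq> {}"
    using finite_subset[OF C_subset_L fin] c False by auto
  then obtain x0 where "x0 \<in> {x\<in>C. x @ [False] \<in> F}"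
    "\<forall>x\<in>{x\<in>C. x @ [False] \<in> F}. bleq x0 x \<longrightarrow> x = x0"
    by (blast dest: finite_bleq_maximal)
  then show ?thesis
    using upper_twin_mem_facet[OF F, of x0] by auto
qed

end

section \<open>Iterated doublings\<close>

lemma Eseq_append_single: "Eseq (Cs @ [C]) = double (Eseq Cs) C"
  by (simp add: Eseq_def)

lemma valid_doubling_seq_append_single:
  "valid_doubling_seq (Cs @ [C]) \<longleftrightarrow>
     valid_doubling_seq Cs \<and> C \<noteq> {} \<and> convex_in (Eseq Cs) C"
  unfolding valid_doubling_seq_def by (auto simp: nth_append less_Suc_eq)

lemma valid_doubling_seqD:
  "valid_doubling_seq Cs \<Longrightarrow> i < length Cs \<Longrightarrow> Cs ! i \<noteq> {} \<and> convex_in (Eseq (take i Cs)) (Cs ! i)"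
  by (simp add: valid_doubling_seq_def)

lemma valid_doubling_seq_take: "valid_doubling_seq Cs \<Longrightarrow> valid_doubling_seq (take k Cs)"
  unfolding valid_doubling_seq_def by (simp add: min_def)

lemma length_Eseq: "valid_doubling_seq Cs \<Longrightarrow> x \<in> Eseq Cs \<Longrightarrow> length x = length Cs"
proof (induction Cs arbitrary: x rule: rev_induct)
  case Nil
  then show ?case
    by (simp add: Eseq_def)
next
  case (snoc C Cs)
  then interpret doubling "Eseq Cs" C "length Cs"
    by unfold_locales (simp_all add: valid_doubling_seq_append_single)
  from snoc.prems obtain y a where "x = y @ [a]" "y \<in> Eseq Cs"
    by (auto simp: Eseq_append_single elim: doubleE)
  then show ?case
    using snoc by (simp add: valid_doubling_seq_append_single)
qed

lemma doubling_Eseq: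
  "valid_doubling_seq (Cs @ [C]) \<Longrightarrow> doubling (Eseq Cs) C (length Cs)"
  by unfold_locales (simp_all add: valid_doubling_seq_append_single length_Eseq)

lemma finite_Eseq: "valid_doubling_seq Cs \<Longrightarrow> finite (Eseq Cs)"
  by (rule finite_subset[OF _ finite_lists_length_eq[OF finite_UNIV, of "length Cs"]])
    (auto simp: length_Eseq)

lemma facets_Eseq_take_length:
  assumes "valid_doubling_seq Cs"
  shows "(\<lambda>F. take (length Cs) ` F) ` facets (order_complex (Eseq Cs)) = facets (order_complex (Eseq Cs))"
proof -
  have "take (length Cs) ` F = F" if "F \<in> facets (order_complex (Eseq Cs))" for F
    using facet_subset[OF that] length_Eseq[OF assms] by (force intro: image_cong_simp[THEN trans])
  then show ?thesis
    by simp
qed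

lemma facets_Eseq_take:
  "valid_doubling_seq Cs \<Longrightarrow> k \<le> length Cs \<Longrightarrow>
     (\<lambda>F. take k ` F) ` facets (order_complex (Eseq Cs)) = facets (order_complex (Eseq (take k Cs)))"
proof (induction Cs arbitrary: k rule: rev_induct)
  case Nil
  then show ?case
    using facets_Eseq_take_length by fastforce
next
  case (snoc C Cs)
  show ?case
  proof (cases "k = length (Cs @ [C])")
    case True
    then show ?thesis
      using facets_Eseq_take_length[OF snoc.prems(1)] by simp
  next
    case False
    then have k: "k \<le> length Cs"
      using snoc.prems(2) by simp
    interpret doubling "Eseq Cs" C "length Cs"
      using doubling_Eseq[OF snoc.prems(1)] .
    have valid: "valid_doubling_seq Cs"
      using snoc.prems(1) by (simp add: valid_doubling_seq_append_single)
    have "take k ` F = take k ` butlast ` F" if "F \<in> facets (order_complex (double (Eseq Cs) C))" for F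
    proof -
      have "length x = Suc (length Cs)" if "x \<in> F" for x
        using facet_subset[OF \<open>F \<in> _\<close>] snoc.prems(1) that length_Eseq
        by (fastforce simp: Eseq_append_single)
      then show ?thesis
        using k by (force simp: image_image butlast_conv_take min_def intro: image_cong)
    qed
    then have "(\<lambda>F. take k ` F) ` facets (order_complex (Eseq (Cs @ [C])))
        = (\<lambda>M. take k ` M) ` (\<lambda>F. butlast ` F) ` facets (order_complex (double (Eseq Cs) C))"
      by (simp add: Eseq_append_single image_image cong: image_cong)
    also have "\<dots> = (\<lambda>M. take k ` M) ` facets (order_complex (Eseq Cs))"
      using facets_double_butlast finite_Eseq[OF valid] by simp
    also have "\<dots> = facets (order_complex (Eseq (take k (Cs @ [C]))))"
      using snoc.IH[OF valid k] k by simp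
    finally show ?thesis .
  qed
qed

section \<open>Shellable iterated doublings\<close>

lemma facet_Eseq_twin:
  assumes valid: "valid_doubling_seq Cs" and i: "i < length Cs"
    and F: "F \<in> facets (order_complex (Eseq Cs))" and meets: "take i ` F \<inter> Cs ! i \<noteq> {}"
  shows "\<exists>u\<in>F. \<exists>v\<in>F. u \<noteq> v \<and> take i u = take i v \<and> take i u \<in> Cs ! i"
proof -
  let ?Q = "Eseq (take i Cs)"
  have valid_Suc: "valid_doubling_seq (take i Cs @ [Cs ! i])"
    using valid_doubling_seq_take[OF valid, of "Suc i"] i by (simp add: take_Suc_conv_app_nth)
  interpret doubling ?Q "Cs ! i" i
    using doubling_Eseq[OF valid_Suc] i by simp
  have "take (Suc i) ` F \<in> facets (order_complex (Eseq (take (Suc i) Cs)))"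
    using facets_Eseq_take[OF valid, of "Suc i"] F i by (metis Suc_leI image_eqI)
  then have G: "take (Suc i) ` F \<in> facets (order_complex (double ?Q (Cs ! i)))"
    using i by (simp add: take_Suc_conv_app_nth Eseq_append_single)
  obtain f where f: "f \<in> F" "take i f \<in> Cs ! i"
    using meets by blast
  have "length f = length Cs"
    using f(1) facet_subset[OF F] length_Eseq[OF valid] by blast
  then have "take (Suc i) f = take i f @ [f ! i]"
    using i by (simp add: take_Suc_conv_app_nth)
  then have "take i f @ [f ! i] \<in> take (Suc i) ` F"
    using f(1) by (metis image_eqI)
  moreover have "finite ?Q"
    using finite_Eseq[OF valid_doubling_seq_take[OF valid]] .
  ultimately obtain x where x: "x \<in> Cs ! i" "x @ [False] \<in> take (Suc i) ` F" "x @ [True] \<in> take (Suc i) ` F"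
    using facet_double_twin[OF _ G f(2)] by blast
  obtain u where u: "x @ [False] = take (Suc i) u" "u \<in> F"
    using x(2) by (rule imageE)
  obtain v where v: "x @ [True] = take (Suc i) v" "v \<in> F"
    using x(3) by (rule imageE)
  have "x \<in> ?Q"
    using x(1) C_subset_L by blast
  then have "length x = i"
    by (rule length_L)
  then have "take i u = x" "take i v = x"
    using arg_cong[OF u(1), of "take i"] arg_cong[OF v(1), of "take i"] by (simp_all add: min_def)
  moreover have "u \<noteq> v"
    using u(1) v(1) by (metis last_snoc)
  ultimately show ?thesis
    using x(1) by (intro bexI[OF _ u(2)] bexI[OF _ v(2)]) simp
qed

lemma facets_Eseq_adjacent_meets:
  assumes valid: "valid_doubling_seq Cs" and i: "i < length Cs"
    and F: "F \<in> facets (order_complex (Eseq Cs))" and adj: "F - {y} \<subseteq> G"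
    and meets: "take i ` F \<inter> Cs ! i \<noteq> {}"
  shows "take i ` G \<inter> Cs ! i \<noteq> {}"
proof -
  obtain u v where "u \<in> F" "v \<in> F" "u \<noteq> v" "take i u = take i v" "take i u \<in> Cs ! i"
    using facet_Eseq_twin[OF valid i F meets] by blast
  moreover from this have "u \<in> G \<or> v \<in> G"
    using adj by blast
  ultimately show ?thesis
    by auto
qed

lemma facets_Eseq_adjacent_max_card:
  assumes valid: "valid_doubling_seq Cs" and i: "i \<le> length Cs"
    and F: "F \<in> facets (order_complex (Eseq Cs))" and G: "G \<in> facets (order_complex (Eseq Cs))"
    and adj: "F - {y} \<subseteq> G"
    and long: "card (take i ` F) = max_chain_card (Eseq (take i Cs))"
  shows "card (take i ` G) = max_chain_card (Eseq (take i Cs))"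
proof -
  let ?Q = "Eseq (take i Cs)"
  have fin: "finite ?Q"
    using finite_Eseq[OF valid_doubling_seq_take[OF valid]] .
  have FG: "take i ` F \<in> facets (order_complex ?Q)" "take i ` G \<in> facets (order_complex ?Q)"
    using facets_Eseq_take[OF valid i] F G by blast+
  have "take i ` F - {take i y} \<subseteq> take i ` G"
    using adj by blast
  then have "card (take i ` F) \<le> card (take i ` G)"
    using card_le_adjacent_facet[OF FG] facet_subset[OF FG(2)] finite_subset[OF _ fin] by blast
  moreover have "card (take i ` G) \<le> max_chain_card ?Q"
    using FG(2) fin by (simp add: facets_order_complex_iff card_chain_le_max_chain_card)
  ultimately show ?thesis
    using long by linarith
qed

lemma finite_facet_Eseq:
  "valid_doubling_seq Cs \<Longrightarrow> F \<in> facets (order_complex (Eseq Cs)) \<Longrightarrow> finite F"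
  by (metis finite_Eseq facet_subset finite_subset)

lemma shelling_first_facet_meets:
  assumes valid: "valid_doubling_seq Cs" and i: "i < length Cs"
    and Fs: "shelling (order_complex (Eseq Cs)) Fs"
  shows "take i ` (Fs ! 0) \<inter> Cs ! i \<noteq> {}"
proof -
  let ?Q = "Eseq (take i Cs)"
  obtain c where c: "c \<in> Cs ! i" "c \<in> ?Q"
    using valid_doubling_seqD[OF valid i] unfolding convex_in_def by blast
  then obtain M where M: "M \<in> facets (order_complex ?Q)" "c \<in> M"
    using chain_extends_to_facet[OF finite_Eseq[OF valid_doubling_seq_take[OF valid, of i]], of "{c}"]
    by (auto simp: is_chain_def bleq_refl)
  then obtain F where "M = take i ` F" "F \<in> facets (order_complex (Eseq Cs))"
    using facets_Eseq_take[OF valid less_imp_le[OF i]] by (metis imageE)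
  then have F: "F \<in> facets (order_complex (Eseq Cs))" "take i ` F \<inter> Cs ! i \<noteq> {}"
    using M(2) c(1) by blast+
  have "\<forall>F\<in>facets (order_complex (Eseq Cs)). finite F"
    using finite_facet_Eseq[OF valid] by blast
  then show ?thesis
    by (rule shelling_propagates_to_first[where P = "\<lambda>F. take i ` F \<inter> Cs ! i \<noteq> {}", OF Fs _ _ F])
      (rule facets_Eseq_adjacent_meets[OF valid i])
qed

lemma shelling_first_facet_max_card:
  assumes valid: "valid_doubling_seq Cs" and i: "i \<le> length Cs"
    and Fs: "shelling (order_complex (Eseq Cs)) Fs"
  shows "card (take i ` (Fs ! 0)) = max_chain_card (Eseq (take i Cs))"
proof -
  let ?Q = "Eseq (take i Cs)"
  obtain M where "M \<in> facets (order_complex ?Q)" "card M = max_chain_card ?Q"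
    using ex_facet_card_max_chain_card[OF finite_Eseq[OF valid_doubling_seq_take[OF valid, of i]]] by blast
  then obtain F where "M = take i ` F" "F \<in> facets (order_complex (Eseq Cs))"
    using facets_Eseq_take[OF valid i] by (metis imageE)
  then have F: "F \<in> facets (order_complex (Eseq Cs))" "card (take i ` F) = max_chain_card ?Q"
    using \<open>card M = max_chain_card ?Q\<close> by simp_all
  have "\<forall>F\<in>facets (order_complex (Eseq Cs)). finite F"
    using finite_facet_Eseq[OF valid] by blast
  then show ?thesis
    by (rule shelling_propagates_to_first[where P = "\<lambda>F. card (take i ` F) = max_chain_card ?Q", OF Fs _ _ F])
      (rule facets_Eseq_adjacent_max_card[OF valid i])
qed

theorem theorem3p24:
  fixes Cs :: "bool list set list"
  assumes "valid_doubling_seq Cs"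
    and "shellable (Eseq Cs)"
  shows "\<forall>i < length Cs. Cs ! i \<inter> spine (Eseq (take i Cs)) \<noteq> {}"
proof (intro allI impI)
  fix i assume i: "i < length Cs"
  obtain Fs where Fs: "shelling (order_complex (Eseq Cs)) Fs"
    using assms(2) by (auto simp: shellable_def shellable_complex_iff_ex_shelling)
  let ?F0 = "take i ` (Fs ! 0)" and ?Q = "Eseq (take i Cs)"
  have "facets (order_complex (Eseq Cs)) \<noteq> {}"
    using chain_extends_to_facet[OF finite_Eseq[OF assms(1)], of "{}"] by (auto simp: is_chain_def)
  then have "?F0 \<in> facets (order_complex ?Q)"
    using shelling_first_facet[OF Fs] facets_Eseq_take[OF assms(1) less_imp_le[OF i]] by blast
  moreover have "card ?F0 = max_chain_card ?Q"
    using shelling_first_facet_max_card[OF assms(1) less_imp_le[OF i] Fs] .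
  ultimately have "?F0 \<subseteq> spine ?Q"
    by (intro max_chain_subset_spine) (simp_all add: facets_order_complex_iff)
  then show "Cs ! i \<inter> spine ?Q \<noteq> {}"
    using shelling_first_facet_meets[OF assms(1) i Fs] by blast
qed

end
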